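(* Let $M\ge 2$, $D,Q,K$ positive integers, and let $\varphi:\mathbb{R}^D\times R\to\mathbb{R}^K$ be a function on a parameter set $R$ such that for every $\bm{x}\in\mathbb{R}^D$ there exists $\rho\in R$ with $\varphi(\bm{x};\rho)\neq\bm{0}$. Consider networks $\mathcal{F}=\{F_i\}_{i=1}^M$ with $F_i(\bm{x})=\bm{W}^i\varphi(\bm{x};\rho^i)$, $\bm{W}^i\in\mathbb{R}^{Q\times K}$, $\rho^i\in R$, and a nonempty finite data set $\mathcal{D}=\{(\bm{x}_n,\bm{y}_n)\}_{n=1}^N\subset\mathbb{R}^D\times\mathbb{R}^Q$. Let $$E_\lambda(\mathcal{F},\mathcal{D}) = \frac{1}{N}\sum_{n=1}^N\Big(\frac{1}{M}\sum_{i=1}^M\|F_i(\bm{x}_n)-\bm{y}_n\|^2-\lambda\frac{1}{M}\sum_{i=1}^M\|F_i(\bm{x}_n)-\overline{F}(\bm{x}_n)\|^2\Big),\quad \overline{F}=\tfrac1M\textstyle\sum_i F_i.$$ Fix $i\in\{1,\dots,M\}$ and fix $F_j$ for all $j\neq i$. With infima over all parametrisations $(\bm{W}^i,\rho^i)$ of $F_i$ only: (i) if $\lambda<\frac{M}{M-1}$ then $\inf E_\lambda(\mathcal{F},\mathcal{D})>-\infty$; (ii) if $\lambda>\frac{M}{M-1}$ then $\inf E_\lambda(\mathcal{F},\mathcal{D})=-\infty$.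
   Context: $\|\cdot\|$ is the Euclidean norm. *)

theory Defs
  imports "HOL-Analysis.Analysis"
begin

definition ens_mean :: "nat \<Rightarrow> (nat \<Rightarrow> real^'d \<Rightarrow> real^'q) \<Rightarrow> real^'d \<Rightarrow> real^'q" where
  "ens_mean M F x = (1 / real M) *\<^sub>R (\<Sum>i<M. F i x)"

definition ens_loss :: "real \<Rightarrow> nat \<Rightarrow> (nat \<Rightarrow> real^'d \<Rightarrow> real^'q) \<Rightarrow> nat
    \<Rightarrow> (nat \<Rightarrow> real^'d) \<Rightarrow> (nat \<Rightarrow> real^'q) \<Rightarrow> real" where
  "ens_loss lam M F N xs ys =
     (1 / real N) * (\<Sum>n<N.
        (1 / real M) * (\<Sum>i<M. (norm (F i (xs n) - ys n))\<^sup>2)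
        - lam * ((1 / real M) * (\<Sum>i<M. (norm (F i (xs n) - ens_mean M F (xs n)))\<^sup>2)))"

definition net :: "(real^'d \<Rightarrow> 'r \<Rightarrow> real^'k) \<Rightarrow> (nat \<Rightarrow> real^'k^'q) \<Rightarrow> (nat \<Rightarrow> 'r)
    \<Rightarrow> nat \<Rightarrow> real^'d \<Rightarrow> real^'q" where
  "net \<phi> W \<rho> i x = W i *v \<phi> x (\<rho> i)"

end

theory Submission imports Defs begin

text \<open>Fix every member of the ensemble except the i-th. Then each data term of the loss is a
  quadratic function \<open>c \<parallel>a\<parallel>\<^sup>2 + \<langle>a, b\<rangle> + d\<close> of the output \<open>a = F\<^sub>i(x\<^sub>n)\<close>, with the same leading
  coefficient \<open>c = (M - \<lambda>(M - 1)) / M\<^sup>2\<close> for all data points. If \<open>c > 0\<close> every data term is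
  bounded below by its minimum. If \<open>c < 0\<close> every data term is bounded above, while the one at a data
  point \<open>x\<^sub>1\<close> tends to \<open>-\<infinity>\<close> when \<open>W\<^sup>i\<close> is scaled along a matrix that does not annihilate the nonzero
  feature vector \<open>\<phi>(x\<^sub>1; \<rho>)\<close>.\<close>

lemma sum_norm_diff_mean_sq:
  fixes G :: "nat \<Rightarrow> 'a::real_inner"
  assumes "M > 0"
  shows "(\<Sum>j<M. (norm (G j - (1 / real M) *\<^sub>R (\<Sum>j<M. G j)))\<^sup>2)
       = (\<Sum>j<M. (norm (G j))\<^sup>2) - (norm (\<Sum>j<M. G j))\<^sup>2 / real M"
proof -
  define s where "s = (\<Sum>j<M. G j)"
  have "(\<Sum>j<M. (norm (G j - (1 / real M) *\<^sub>R s))\<^sup>2)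
      = (\<Sum>j<M. (norm (G j))\<^sup>2 - (2 / real M) * inner (G j) s + (norm s)\<^sup>2 / (real M)\<^sup>2)"
  proof (rule sum.cong)
    fix j
    have "(norm (G j - (1 / real M) *\<^sub>R s))\<^sup>2
        = inner (G j) (G j) - 2 * (1 / real M) * inner (G j) s + (1 / real M)\<^sup>2 * inner s s"
      unfolding power2_norm_eq_inner
      by (simp add: inner_diff_left inner_diff_right inner_commute algebra_simps power2_eq_square)
    then show "(norm (G j - (1 / real M) *\<^sub>R s))\<^sup>2
        = (norm (G j))\<^sup>2 - (2 / real M) * inner (G j) s + (norm s)\<^sup>2 / (real M)\<^sup>2"
      by (simp add: power2_norm_eq_inner[symmetric] field_simps)
  qed simp
  also have "\<dots> = (\<Sum>j<M. (norm (G j))\<^sup>2) - (2 / real M) * inner s s + real M * (norm s)\<^sup>2 / (real M)\<^sup>2"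
    by (simp add: sum.distrib sum_subtractf sum_distrib_left[symmetric]
        sum_divide_distrib[symmetric] inner_sum_left s_def)
  also have "\<dots> = (\<Sum>j<M. (norm (G j))\<^sup>2) - (norm s)\<^sup>2 / real M"
    using assms by (simp add: power2_norm_eq_inner[symmetric] field_simps power2_eq_square)
  finally show ?thesis by (simp add: s_def)
qed

definition ens_sample_loss :: "real \<Rightarrow> nat \<Rightarrow> (nat \<Rightarrow> 'a::real_inner) \<Rightarrow> 'a \<Rightarrow> real" where
  "ens_sample_loss lam M G y =
     (1 / real M) * (\<Sum>j<M. (norm (G j - y))\<^sup>2)
     - lam * ((1 / real M) * (\<Sum>j<M. (norm (G j - (1 / real M) *\<^sub>R (\<Sum>j<M. G j)))\<^sup>2))"

lemma ens_loss_eq_sample_loss: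
  "ens_loss lam M F N xs ys = (1 / real N) * (\<Sum>n<N. ens_sample_loss lam M (\<lambda>j. F j (xs n)) (ys n))"
  by (simp add: ens_loss_def ens_mean_def ens_sample_loss_def)

lemma ens_sample_loss_quadratic_in_member:
  fixes G :: "nat \<Rightarrow> 'a::real_inner"
  assumes "i < M"
  obtains b d where "\<And>a. ens_sample_loss lam M (G(i := a)) y
      = (real M - lam * (real M - 1)) / (real M)\<^sup>2 * (norm a)\<^sup>2 + inner a b + d"
proof
  fix a
  let ?H = "G(i := a)"
  define Js where "Js = {..<M} - {i}"
  define S where "S = (\<Sum>j\<in>Js. G j)"
  define A where "A = (\<Sum>j\<in>Js. (norm (G j - y))\<^sup>2)"
  define T where "T = (\<Sum>j\<in>Js. (norm (G j))\<^sup>2)"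
  have M: "M > 0" and i: "i \<in> {..<M}" using assms by auto
  have split: "(\<Sum>j<M. f (?H j)) = f a + (\<Sum>j\<in>Js. f (G j))" for f :: "'a \<Rightarrow> 'b::comm_monoid_add"
    unfolding Js_def by (subst sum.remove[OF _ i]) (auto intro!: sum.cong)
  have sum_H: "(\<Sum>j<M. ?H j) = a + S"
    using split[of id] by (simp add: S_def)
  have sum_dist: "(\<Sum>j<M. (norm (?H j - y))\<^sup>2) = (norm a)\<^sup>2 - 2 * inner a y + (norm y)\<^sup>2 + A"
    using split[of "\<lambda>v. (norm (v - y))\<^sup>2"]
    by (simp add: A_def power2_norm_eq_inner inner_diff_left inner_diff_right inner_commute)
  have sum_norm: "(\<Sum>j<M. (norm (?H j))\<^sup>2) = (norm a)\<^sup>2 + T"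
    using split[of "\<lambda>v. (norm v)\<^sup>2"] by (simp add: T_def)
  have norm_add: "(norm (a + S))\<^sup>2 = (norm a)\<^sup>2 + 2 * inner a S + (norm S)\<^sup>2"
    by (simp add: power2_norm_eq_inner inner_add_left inner_add_right inner_commute)
  show "ens_sample_loss lam M ?H y
      = (real M - lam * (real M - 1)) / (real M)\<^sup>2 * (norm a)\<^sup>2
        + inner a ((2 * lam / (real M)\<^sup>2) *\<^sub>R S - (2 / real M) *\<^sub>R y)
        + ((A + (norm y)\<^sup>2) / real M - lam / real M * (T - (norm S)\<^sup>2 / real M))"
    unfolding ens_sample_loss_def sum_norm_diff_mean_sq[OF M, of ?H]
    unfolding sum_H sum_dist sum_norm norm_add
    using M by (simp add: inner_diff_right field_simps power2_eq_square)
qed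

lemma ens_loss_quadratic_in_member:
  fixes F :: "nat \<Rightarrow> real^'d \<Rightarrow> real^'q"
  assumes "i < M"
  obtains b :: "nat \<Rightarrow> real^'q" and d :: "nat \<Rightarrow> real"
  where "\<And>g. ens_loss lam M (F(i := g)) N xs ys = (1 / real N) * (\<Sum>n<N.
      (real M - lam * (real M - 1)) / (real M)\<^sup>2 * (norm (g (xs n)))\<^sup>2 + inner (g (xs n)) (b n) + d n)"
proof -
  let ?c = "(real M - lam * (real M - 1)) / (real M)\<^sup>2"
  let ?G = "\<lambda>n j. F j (xs n)"
  have "\<exists>b d. \<forall>a. ens_sample_loss lam M ((?G n)(i := a)) (ys n) = ?c * (norm a)\<^sup>2 + inner a b + d"
    for n
    by (rule ens_sample_loss_quadratic_in_member[OF assms, where G = "?G n" and lam = lam and y = "ys n"]) blast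
  then obtain b d where bd: "\<And>n a. ens_sample_loss lam M ((?G n)(i := a)) (ys n)
      = ?c * (norm a)\<^sup>2 + inner a (b n) + d n"
    by metis
  have "(\<lambda>j. (F(i := g)) j (xs n)) = (?G n)(i := g (xs n))" for g n
    by auto
  then show thesis
    by (intro that[of b d]) (simp add: ens_loss_eq_sample_loss bd)
qed

lemma quadratic_form_lower_bound:
  fixes a b :: "'a::real_inner"
  assumes "c > 0"
  shows "d - (norm b)\<^sup>2 / (4 * c) \<le> c * (norm a)\<^sup>2 + inner a b + d"
proof -
  have "0 \<le> c * (norm a - norm b / (2 * c))\<^sup>2" using assms by simp
  also have "\<dots> = c * (norm a)\<^sup>2 - norm a * norm b + (norm b)\<^sup>2 / (4 * c)"
    using assms by (simp add: power2_eq_square field_simps)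
  also have "\<dots> \<le> c * (norm a)\<^sup>2 + inner a b + (norm b)\<^sup>2 / (4 * c)"
    using Cauchy_Schwarz_ineq2[of a b] by linarith
  finally show ?thesis by simp
qed

lemma quadratic_form_upper_bound:
  fixes a b :: "'a::real_inner"
  assumes "c < 0"
  shows "c * (norm a)\<^sup>2 + inner a b + d \<le> d - (norm b)\<^sup>2 / (4 * c)"
  using quadratic_form_lower_bound[where c = "- c" and a = a and b = "- b" and d = "- d"] assms by simp

lemma quadratic_form_eventually_below:
  fixes b :: "'a::real_inner"
  assumes "c < 0"
  obtains s0 where "\<And>a. s0 \<le> norm a \<Longrightarrow> c * (norm a)\<^sup>2 + inner a b + d < L"
proof
  fix a :: 'a
  define s0 where "s0 = max 1 ((norm b + \<bar>d - L\<bar> + 1) / (- c))"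
  assume "s0 \<le> norm a"
  then have "c * norm a \<le> - (norm b + \<bar>d - L\<bar> + 1)" and "1 \<le> norm a"
    using assms by (auto simp: s0_def field_simps)
  then have "norm a * (c * norm a + norm b) \<le> 1 * (c * norm a + norm b)"
    by (intro mult_right_mono_neg) auto
  then have "c * (norm a)\<^sup>2 + norm a * norm b < L - d"
    using \<open>c * norm a \<le> _\<close> by (simp add: power2_eq_square algebra_simps)
  then show "c * (norm a)\<^sup>2 + inner a b + d < L"
    using Cauchy_Schwarz_ineq2[of a b] by linarith
qed

lemma ens_loss_member_bounded_below:
  fixes F :: "nat \<Rightarrow> real^'d \<Rightarrow> real^'q"
  assumes "i < M" and "lam * (real M - 1) < real M"
  obtains L where "\<And>g. L \<le> ens_loss lam M (F(i := g)) N xs ys"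
proof -
  let ?c = "(real M - lam * (real M - 1)) / (real M)\<^sup>2"
  obtain b d where loss: "\<And>g. ens_loss lam M (F(i := g)) N xs ys = (1 / real N) * (\<Sum>n<N.
      ?c * (norm (g (xs n)))\<^sup>2 + inner (g (xs n)) (b n) + d n)"
    using ens_loss_quadratic_in_member[OF assms(1), where F = F and lam = lam and N = N] by blast
  have c: "?c > 0" using assms by simp
  have "(1 / real N) * (\<Sum>n<N. d n - (norm (b n))\<^sup>2 / (4 * ?c)) \<le> ens_loss lam M (F(i := g)) N xs ys"
    for g
    unfolding loss by (intro mult_left_mono sum_mono quadratic_form_lower_bound[OF c]) auto
  then show thesis by (rule that)
qed

lemma ens_loss_member_unbounded_below:
  fixes F :: "nat \<Rightarrow> real^'d \<Rightarrow> real^'q"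
  assumes "i < M" and "lam * (real M - 1) > real M" and "N > 0"
  obtains s0 where "\<And>g. s0 \<le> norm (g (xs 0)) \<Longrightarrow> ens_loss lam M (F(i := g)) N xs ys < L"
proof -
  let ?c = "(real M - lam * (real M - 1)) / (real M)\<^sup>2"
  obtain b d where loss: "\<And>g. ens_loss lam M (F(i := g)) N xs ys = (1 / real N) * (\<Sum>n<N.
      ?c * (norm (g (xs n)))\<^sup>2 + inner (g (xs n)) (b n) + d n)"
    using ens_loss_quadratic_in_member[OF assms(1), where F = F and lam = lam and N = N] by blast
  have c: "?c < 0" using assms by (simp add: divide_neg_pos)
  define Q where "Q a n = ?c * (norm a)\<^sup>2 + inner a (b n) + d n" for a n
  define U where "U n = d n - (norm (b n))\<^sup>2 / (4 * ?c)" for n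
  define Js where "Js = {..<N} - {0}"
  obtain s0 where s0: "\<And>a. s0 \<le> norm a \<Longrightarrow> Q a 0 < real N * L - (\<Sum>n\<in>Js. U n)"
    unfolding Q_def
    using quadratic_form_eventually_below[OF c, where b = "b 0" and d = "d 0"] by blast
  show thesis
  proof (rule that)
    fix g :: "real^'d \<Rightarrow> real^'q"
    assume "s0 \<le> norm (g (xs 0))"
    have "(\<Sum>n<N. Q (g (xs n)) n) = Q (g (xs 0)) 0 + (\<Sum>n\<in>Js. Q (g (xs n)) n)"
      unfolding Js_def using assms(3) by (intro sum.remove) auto
    also have "\<dots> < real N * L"
      using s0[OF \<open>s0 \<le> _\<close>] sum_mono[of Js "\<lambda>n. Q (g (xs n)) n" U]
        quadratic_form_upper_bound[OF c] unfolding Q_def U_def by fastforce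
    finally show "ens_loss lam M (F(i := g)) N xs ys < L"
      unfolding loss Q_def using assms(3) by (simp add: field_simps)
  qed
qed

lemma exists_matrix_vector_mult_norm_eq:
  fixes u :: "real^'k"
  assumes "u \<noteq> 0" and "s \<ge> 0"
  obtains V :: "real^'k^'q" where "norm (V *v u) = s"
proof -
  define V1 :: "real^'k^'q" where "V1 = (\<chi> q. u)"
  have "(V1 *v u) $ q = inner u u" for q
    by (simp add: V1_def matrix_vector_mult_def inner_vec_def)
  with assms(1) have "V1 *v u \<noteq> 0"
    by (metis inner_eq_zero_iff zero_index)
  then have "norm ((s / norm (V1 *v u)) *\<^sub>R V1 *v u) = s"
    using assms(2) by (simp flip: scaleR_matrix_vector_assoc)
  then show thesis by (rule that)
qed

lemma net_update:
  "net \<phi> (W(i := V)) (\<rho>(i := r)) = (net \<phi> W \<rho>)(i := \<lambda>x. V *v \<phi> x r)"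
  by (simp add: net_def fun_eq_iff)

theorem theorem6:
  fixes \<phi> :: "real^'d \<Rightarrow> 'r \<Rightarrow> real^'k"
    and R :: "'r set"
    and M N :: nat
    and W :: "nat \<Rightarrow> real^'k^'q"
    and \<rho> :: "nat \<Rightarrow> 'r"
    and xs :: "nat \<Rightarrow> real^'d"
    and ys :: "nat \<Rightarrow> real^'q"
    and i :: nat
    and lam :: real
  assumes M: "M \<ge> 2"
    and N: "N \<ge> 1"
    and nonzero: "\<forall>x. \<exists>r\<in>R. \<phi> x r \<noteq> 0"
    and params: "\<forall>j<M. \<rho> j \<in> R"
    and i: "i < M"
  shows "(lam < real M / (real M - 1) \<longrightarrow>
           (INF (V, r) \<in> UNIV \<times> R.
              ereal (ens_loss lam M (net \<phi> (W(i := V)) (\<rho>(i := r))) N xs ys)) > -\<infinity>)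
       \<and> (lam > real M / (real M - 1) \<longrightarrow>
           (INF (V, r) \<in> UNIV \<times> R.
              ereal (ens_loss lam M (net \<phi> (W(i := V)) (\<rho>(i := r))) N xs ys)) = -\<infinity>)"
proof -
  let ?I = "\<lambda>lam. INF (V, r) \<in> UNIV \<times> R.
              ereal (ens_loss lam M ((net \<phi> W \<rho>)(i := \<lambda>x. V *v \<phi> x r)) N xs ys)"
  have "real M - 1 > 0" and N0: "N > 0" using M N by simp_all
  show ?thesis
    unfolding net_update
  proof (intro conjI impI)
    assume "lam < real M / (real M - 1)"
    then have "lam * (real M - 1) < real M" using \<open>real M - 1 > 0\<close> by (simp add: field_simps)
    then obtain L where "\<And>g. L \<le> ens_loss lam M ((net \<phi> W \<rho>)(i := g)) N xs ys"
      using ens_loss_member_bounded_below[OF i, where F = "net \<phi> W \<rho>"] by blast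
    then have "?I lam \<noteq> -\<infinity>"
      unfolding INF_eq_minf by (intro exI[of _ "ereal L"]) auto
    then show "?I lam > -\<infinity>" by (simp add: order_less_le)
  next
    assume "lam > real M / (real M - 1)"
    then have lam: "lam * (real M - 1) > real M" using \<open>real M - 1 > 0\<close> by (simp add: field_simps)
    obtain r0 where r0: "r0 \<in> R" "\<phi> (xs 0) r0 \<noteq> 0" using nonzero by blast
    have "?I lam \<le> ereal L" for L
    proof -
      obtain s0 where s0: "\<And>g. s0 \<le> norm (g (xs 0)) \<Longrightarrow> ens_loss lam M ((net \<phi> W \<rho>)(i := g)) N xs ys < L"
        using ens_loss_member_unbounded_below[OF i lam N0, where F = "net \<phi> W \<rho>"] by blast
      obtain V :: "real^'k^'q" where "norm (V *v \<phi> (xs 0) r0) = max 0 s0"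
        by (rule exists_matrix_vector_mult_norm_eq[OF r0(2), where s = "max 0 s0"]) simp
      then have "ens_loss lam M ((net \<phi> W \<rho>)(i := \<lambda>x. V *v \<phi> x r0)) N xs ys < L"
        by (intro s0) simp
      then show ?thesis
        using r0(1) by (intro INF_lower2[of "(V, r0)"]) auto
    qed
    then show "?I lam = -\<infinity>" by (rule ereal_bot)
  qed
qed

end
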